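(* Let $G=\langle X\rangle$ be a $\delta$-hyperbolic group, $\delta$ a positive integer, and let $V$ be a cyclically minimal word over $X\cup X^{-1}$ with $\|V\|\ge\alpha$, where $\alpha=180\delta$. Then for each $k\in\mathbb Z$, $V^k$ is a $(4,2520\delta)$-quasi-geodesic word in $\Gamma(G,X)$.
   Context: $X$ is finite; $G$ is $\delta$-hyperbolic if every geodesic triangle in the Cayley graph $\Gamma(G,X)$ is $\delta$-slim (each side lies in the $\delta$-neighborhood of the union of the other two). $\|W\|$ denotes the length of a word $W$. A word $V$ is cyclically minimal if $\|V\|$ is minimal among the lengths of all words representing elements conjugate in $G$ to the element represented by $V$. A word $W$ is $(\lambda,c)$-quasi-geodesic if every path $p$ in $\Gamma(G,X)$ labeled by $W$, parametrized by length, satisfies $|s-t|\le\lambda\, d(p(s),p(t))+c$ for all $s,t$. *)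

theory Defs
  imports Complex_Main "HOL-Algebra.Generated_Groups"
begin

text \<open>Words over X \<union> X^-1: a letter is a pair (x, b) with x \<in> X; (x, True) stands
  for x and (x, False) for its formal inverse.\<close>

definition is_word :: "'g set \<Rightarrow> ('g \<times> bool) list \<Rightarrow> bool" where
  "is_word X w \<longleftrightarrow> (\<forall>l \<in> set w. fst l \<in> X)"

definition letter_val :: "('g, 'b) monoid_scheme \<Rightarrow> 'g \<times> bool \<Rightarrow> 'g" where
  "letter_val G l = (if snd l then fst l else inv\<^bsub>G\<^esub> (fst l))"

definition word_eval :: "('g, 'b) monoid_scheme \<Rightarrow> ('g \<times> bool) list \<Rightarrow> 'g" where
  "word_eval G w = foldr (\<lambda>l acc. letter_val G l \<otimes>\<^bsub>G\<^esub> acc) w \<one>\<^bsub>G\<^esub>"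

definition word_inv :: "('g \<times> bool) list \<Rightarrow> ('g \<times> bool) list" where
  "word_inv w = rev (map (\<lambda>(x, b). (x, \<not> b)) w)"

definition word_pow :: "('g \<times> bool) list \<Rightarrow> int \<Rightarrow> ('g \<times> bool) list" where
  "word_pow V k = (if 0 \<le> k then concat (replicate (nat k) V)
                   else concat (replicate (nat (- k)) (word_inv V)))"

definition word_dist :: "('g, 'b) monoid_scheme \<Rightarrow> 'g set \<Rightarrow> 'g \<Rightarrow> 'g \<Rightarrow> nat" where
  "word_dist G X u v = (LEAST n. \<exists>w. is_word X w \<and> length w = n \<and>
                          word_eval G w = inv\<^bsub>G\<^esub> u \<otimes>\<^bsub>G\<^esub> v)"

definition cyclically_minimal :: "('g, 'b) monoid_scheme \<Rightarrow> 'g set \<Rightarrow> ('g \<times> bool) list \<Rightarrow> bool" where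
  "cyclically_minimal G X V \<longleftrightarrow> is_word X V \<and>
     (\<forall>W h. is_word X W \<longrightarrow> h \<in> carrier G \<longrightarrow>
        word_eval G W = inv\<^bsub>G\<^esub> h \<otimes>\<^bsub>G\<^esub> word_eval G V \<otimes>\<^bsub>G\<^esub> h \<longrightarrow> length V \<le> length W)"

text \<open>Points of the geometric realisation of the Cayley graph \<Gamma>(G,X), each edge
  isometric to [0,1]. The edge labelled x \<in> X goes from g to g x; the point
  Edge g x s lies at distance s from g along it.\<close>
datatype 'g cpoint = Vert 'g | Edge 'g 'g real

fun valid_point :: "('g, 'b) monoid_scheme \<Rightarrow> 'g set \<Rightarrow> 'g cpoint \<Rightarrow> bool" where
  "valid_point G X (Vert g) = (g \<in> carrier G)"
| "valid_point G X (Edge g x s) = (g \<in> carrier G \<and> x \<in> X \<and> 0 \<le> s \<and> s \<le> 1)"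

fun ends :: "('g, 'b) monoid_scheme \<Rightarrow> 'g cpoint \<Rightarrow> ('g \<times> real) list" where
  "ends G (Vert g) = [(g, 0)]"
| "ends G (Edge g x s) = [(g, s), (g \<otimes>\<^bsub>G\<^esub> x, 1 - s)]"

fun same_edge_dist :: "'g cpoint \<Rightarrow> 'g cpoint \<Rightarrow> real list" where
  "same_edge_dist (Edge g x s) (Edge h y t) = (if g = h \<and> x = y then [\<bar>s - t\<bar>] else [])"
| "same_edge_dist _ _ = []"

definition cdist :: "('g, 'b) monoid_scheme \<Rightarrow> 'g set \<Rightarrow> 'g cpoint \<Rightarrow> 'g cpoint \<Rightarrow> real" where
  "cdist G X p q = Min (set ([a + real (word_dist G X u v) + b. (u, a) \<leftarrow> ends G p, (v, b) \<leftarrow> ends G q]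
                             @ same_edge_dist p q))"

definition geodesic :: "('g, 'b) monoid_scheme \<Rightarrow> 'g set \<Rightarrow> (real \<Rightarrow> 'g cpoint) \<Rightarrow> real \<Rightarrow> bool" where
  "geodesic G X \<gamma> L \<longleftrightarrow> 0 \<le> L \<and> (\<forall>s \<in> {0..L}. valid_point G X (\<gamma> s)) \<and>
     (\<forall>s \<in> {0..L}. \<forall>t \<in> {0..L}. cdist G X (\<gamma> s) (\<gamma> t) = \<bar>s - t\<bar>)"

definition in_nbhd :: "('g, 'b) monoid_scheme \<Rightarrow> 'g set \<Rightarrow> real \<Rightarrow> 'g cpoint \<Rightarrow> (real \<Rightarrow> 'g cpoint) \<Rightarrow> real \<Rightarrow> bool" where
  "in_nbhd G X d p \<gamma> L \<longleftrightarrow> (\<exists>t \<in> {0..L}. cdist G X p (\<gamma> t) \<le> d)"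

definition side_slim :: "('g, 'b) monoid_scheme \<Rightarrow> 'g set \<Rightarrow> real \<Rightarrow> (real \<Rightarrow> 'g cpoint) \<Rightarrow> real
     \<Rightarrow> (real \<Rightarrow> 'g cpoint) \<Rightarrow> real \<Rightarrow> (real \<Rightarrow> 'g cpoint) \<Rightarrow> real \<Rightarrow> bool" where
  "side_slim G X d \<alpha> A \<beta> B \<gamma> C \<longleftrightarrow>
     (\<forall>s \<in> {0..A}. in_nbhd G X d (\<alpha> s) \<beta> B \<or> in_nbhd G X d (\<alpha> s) \<gamma> C)"

definition hyperbolic :: "('g, 'b) monoid_scheme \<Rightarrow> 'g set \<Rightarrow> real \<Rightarrow> bool" where
  "hyperbolic G X \<delta> \<longleftrightarrow>
     (\<forall>\<alpha> A \<beta> B \<gamma> C. geodesic G X \<alpha> A \<and> geodesic G X \<beta> B \<and> geodesic G X \<gamma> C \<and>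
        cdist G X (\<alpha> A) (\<beta> 0) = 0 \<and> cdist G X (\<beta> B) (\<gamma> 0) = 0 \<and> cdist G X (\<gamma> C) (\<alpha> 0) = 0
      \<longrightarrow> side_slim G X \<delta> \<alpha> A \<beta> B \<gamma> C \<and> side_slim G X \<delta> \<beta> B \<gamma> C \<alpha> A
          \<and> side_slim G X \<delta> \<gamma> C \<alpha> A \<beta> B)"

definition word_path :: "('g, 'b) monoid_scheme \<Rightarrow> 'g \<Rightarrow> ('g \<times> bool) list \<Rightarrow> real \<Rightarrow> 'g cpoint" where
  "word_path G g W s =
     (if s < real (length W) then
        (let i = nat \<lfloor>s\<rfloor>; u = g \<otimes>\<^bsub>G\<^esub> word_eval G (take i W); l = W ! i in
          if snd l then Edge u (fst l) (s - real i)
          else Edge (u \<otimes>\<^bsub>G\<^esub> inv\<^bsub>G\<^esub> (fst l)) (fst l) (1 - (s - real i)))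
      else Vert (g \<otimes>\<^bsub>G\<^esub> word_eval G W))"

definition quasi_geodesic_word :: "('g, 'b) monoid_scheme \<Rightarrow> 'g set \<Rightarrow> real \<Rightarrow> real \<Rightarrow> ('g \<times> bool) list \<Rightarrow> bool" where
  "quasi_geodesic_word G X lam c W \<longleftrightarrow>
     (\<forall>g \<in> carrier G. \<forall>s \<in> {0..real (length W)}. \<forall>t \<in> {0..real (length W)}.
        \<bar>s - t\<bar> \<le> lam * cdist G X (word_path G g W s) (word_path G g W t) + c)"

end

theory Submission
  imports Defs
begin

text \<open>Every subword of \<open>V\<^sup>k\<close> of length at most \<open>\<parallel>V\<parallel>\<close> is a prefix of a cyclic
  permutation of \<open>V\<close>, so a shorter word with the same value would produce a word shorter than
  \<open>V\<close> representing a conjugate of \<open>V\<close>: thus \<open>V\<^sup>k\<close> is a \<open>180\<delta>\<close>-local geodesic.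
  Walking along a local geodesic in steps of \<open>90\<delta>\<close>, slimness of the triangle formed with the
  starting point shows that each step increases the distance from the start by at least
  \<open>90\<delta> - 2\<delta>\<close>. Hence \<open>44 |j - j'| \<le> 45 d(j, j') + 90\<delta>\<close> for vertices of the path, which gives
  the constants \<open>(4, 2520\<delta>)\<close>.\<close>

lemma nth_concat_replicate:
  "p < K * length V \<Longrightarrow> concat (replicate K V) ! p = V ! (p mod length V)"
proof (induction K arbitrary: p)
  case 0
  then show ?case by simp
next
  case (Suc K)
  show ?case
  proof (cases "p < length V")
    case True
    then show ?thesis by (simp add: nth_append)
  next
    case False
    then have "p - length V < K * length V"
      using Suc.prems by simp
    then show ?thesis
      using Suc.IH False by (simp add: nth_append mod_if)
  qed
qed

lemma subword_concat_replicate: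
  assumes "n \<le> length V" "i + n \<le> K * length V"
  shows "take n (drop i (concat (replicate K V))) = take n (rotate (i mod length V) V)"
    (is "?S = ?R")
proof (rule nth_equalityI)
  show "length ?S = length ?R"
    using assms by (simp add: length_concat sum_list_replicate)
next
  fix q
  assume "q < length ?S"
  then have q: "q < n" "i + q < K * length V"
    using assms by (auto simp: length_concat sum_list_replicate)
  have "?S ! q = concat (replicate K V) ! (i + q)"
    using q by (simp add: length_concat sum_list_replicate)
  also have "\<dots> = V ! ((i + q) mod length V)"
    using nth_concat_replicate[OF q(2)] .
  also have "\<dots> = ?R ! q"
    using q assms(1) by (simp add: nth_rotate mod_add_right_eq add.commute)
  finally show "?S ! q = ?R ! q" .
qed

locale cayley_graph = group G for G (structure) +
  fixes X :: "'a set"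
  assumes gens_carrier: "X \<subseteq> carrier G" and generate_gens: "generate G X = carrier G"
begin

abbreviation d :: "'a \<Rightarrow> 'a \<Rightarrow> nat" where "d u v \<equiv> word_dist G X u v"

lemma is_word_simps [simp]:
  "is_word X []"
  "is_word X (l # w) \<longleftrightarrow> fst l \<in> X \<and> is_word X w"
  "is_word X (u @ w) \<longleftrightarrow> is_word X u \<and> is_word X w"
  by (auto simp: is_word_def)

lemma is_word_take: "is_word X w \<Longrightarrow> is_word X (take i w)"
  and is_word_drop: "is_word X w \<Longrightarrow> is_word X (drop i w)"
  and is_word_rotate: "is_word X w \<Longrightarrow> is_word X (rotate i w)"
  and is_word_concat_replicate: "is_word X w \<Longrightarrow> is_word X (concat (replicate n w))"
  and is_word_nth: "is_word X w \<Longrightarrow> i < length w \<Longrightarrow> fst (w ! i) \<in> X"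
  by (auto simp: is_word_def dest: in_set_takeD in_set_dropD)

lemma is_word_word_inv: "is_word X w \<Longrightarrow> is_word X (word_inv w)"
  by (auto simp: is_word_def word_inv_def)

lemma length_word_inv [simp]: "length (word_inv w) = length w"
  by (simp add: word_inv_def)

lemma letter_val_carrier: "fst l \<in> X \<Longrightarrow> letter_val G l \<in> carrier G"
  using gens_carrier by (auto simp: letter_val_def)

lemma word_eval_Nil [simp]: "word_eval G [] = \<one>"
  by (simp add: word_eval_def)

lemma word_eval_Cons [simp]: "word_eval G (l # w) = letter_val G l \<otimes> word_eval G w"
  by (simp add: word_eval_def)

lemma word_eval_carrier: "is_word X w \<Longrightarrow> word_eval G w \<in> carrier G"
  by (induction w) (auto simp: letter_val_carrier)

lemma word_eval_append:
  "is_word X u \<Longrightarrow> is_word X w \<Longrightarrow> word_eval G (u @ w) = word_eval G u \<otimes> word_eval G w"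
  by (induction u) (auto simp: letter_val_carrier word_eval_carrier m_assoc)

lemma word_eval_word_inv: "is_word X w \<Longrightarrow> word_eval G (word_inv w) = inv (word_eval G w)"
proof (induction w)
  case Nil
  then show ?case by (simp add: word_inv_def)
next
  case (Cons l w)
  obtain x b where l: "l = (x, b)" by fastforce
  have "word_inv (l # w) = word_inv w @ [(x, \<not> b)]"
    by (simp add: word_inv_def l)
  moreover have "letter_val G (x, \<not> b) = inv (letter_val G l)"
    using Cons.prems gens_carrier by (auto simp: letter_val_def l)
  ultimately show ?case
    using Cons by (simp add: l word_eval_append is_word_word_inv letter_val_carrier
        word_eval_carrier inv_mult_group)
qed

lemma word_eval_take_Suc:
  assumes "is_word X w" "i < length w"
  shows "word_eval G (take (Suc i) w) = word_eval G (take i w) \<otimes> letter_val G (w ! i)"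
proof -
  have "take (Suc i) w = take i w @ [w ! i]"
    using assms(2) by (simp add: take_Suc_conv_app_nth)
  then show ?thesis
    using assms by (simp add: word_eval_append is_word_take letter_val_carrier is_word_nth)
qed

lemma word_eval_rotate:
  fixes r :: nat
  assumes "is_word X w"
  defines "c \<equiv> word_eval G (take (r mod length w) w)"
  shows "word_eval G (rotate r w) = inv c \<otimes> word_eval G w \<otimes> c"
proof -
  let ?k = "r mod length w"
  have c: "c \<in> carrier G" and rest: "word_eval G (drop ?k w) \<in> carrier G"
    using assms word_eval_carrier is_word_take is_word_drop by auto
  have "word_eval G w = c \<otimes> word_eval G (drop ?k w)"
    using word_eval_append[OF is_word_take is_word_drop, OF assms(1) assms(1), of ?k ?k]
    by (simp add: c_def)
  then have "inv c \<otimes> word_eval G w \<otimes> c = word_eval G (drop ?k w) \<otimes> c"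
    using c rest by (simp add: m_assoc[symmetric])
  also have "\<dots> = word_eval G (rotate r w)"
    by (simp add: c_def rotate_drop_take word_eval_append is_word_take is_word_drop assms(1))
  finally show ?thesis by simp
qed

lemma word_exists: "h \<in> carrier G \<Longrightarrow> \<exists>w. is_word X w \<and> word_eval G w = h"
  unfolding generate_gens[symmetric]
proof (induction rule: generate.induct)
  case one
  then show ?case by (intro exI[of _ "[]"]) simp
next
  case (incl h)
  then show ?case using gens_carrier by (intro exI[of _ "[(h, True)]"]) (auto simp: letter_val_def)
next
  case (inv h)
  then show ?case using gens_carrier by (intro exI[of _ "[(h, False)]"]) (auto simp: letter_val_def)
next
  case (eng h1 h2)
  then obtain w1 w2 where "is_word X w1" "word_eval G w1 = h1" "is_word X w2" "word_eval G w2 = h2"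
    by blast
  then show ?case by (intro exI[of _ "w1 @ w2"]) (simp add: word_eval_append)
qed

lemma word_dist_attained:
  assumes "u \<in> carrier G" "v \<in> carrier G"
  shows "\<exists>w. is_word X w \<and> length w = d u v \<and> word_eval G w = inv u \<otimes> v"
proof -
  have "inv u \<otimes> v \<in> carrier G"
    using assms by simp
  then obtain w where "is_word X w" "word_eval G w = inv u \<otimes> v"
    using word_exists by blast
  then have "\<exists>n w. is_word X w \<and> length w = n \<and> word_eval G w = inv u \<otimes> v"
    by blast
  from LeastI_ex[OF this] show ?thesis
    unfolding word_dist_def .
qed

lemma word_dist_le: "is_word X w \<Longrightarrow> word_eval G w = inv u \<otimes> v \<Longrightarrow> d u v \<le> length w"
  unfolding word_dist_def by (rule Least_le) blast

lemma word_dist_le_length: "u \<in> carrier G \<Longrightarrow> is_word X w \<Longrightarrow> d u (u \<otimes> word_eval G w) \<le> length w"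
  by (rule word_dist_le) (auto simp: word_eval_carrier m_assoc[symmetric])

lemma word_dist_self [simp]: "u \<in> carrier G \<Longrightarrow> d u u = 0"
  using word_dist_le[of "[]" u u] by simp

lemma word_dist_le_sym:
  assumes "u \<in> carrier G" "v \<in> carrier G"
  shows "d u v \<le> d v u"
proof -
  obtain w where w: "is_word X w" "length w = d v u" "word_eval G w = inv v \<otimes> u"
    using word_dist_attained assms by blast
  have "word_eval G (word_inv w) = inv u \<otimes> v"
    using w assms by (simp add: word_eval_word_inv inv_mult_group)
  then show ?thesis
    using word_dist_le[of "word_inv w" u v] w is_word_word_inv by simp
qed

lemma word_dist_sym: "u \<in> carrier G \<Longrightarrow> v \<in> carrier G \<Longrightarrow> d u v = d v u"
  using word_dist_le_sym by (simp add: le_antisym)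

lemma word_dist_triangle:
  assumes "u \<in> carrier G" "v \<in> carrier G" "z \<in> carrier G"
  shows "d u z \<le> d u v + d v z"
proof -
  obtain w where w: "is_word X w" "length w = d u v" "word_eval G w = inv u \<otimes> v"
    using word_dist_attained assms by blast
  obtain w' where w': "is_word X w'" "length w' = d v z" "word_eval G w' = inv v \<otimes> z"
    using word_dist_attained assms by blast
  have "word_eval G (w @ w') = inv u \<otimes> z"
    using w w' assms by (simp add: word_eval_append m_assoc) (simp add: m_assoc[symmetric])
  then show ?thesis using word_dist_le[of "w @ w'" u z] w w' by simp
qed

definition path_vertex :: "'a \<Rightarrow> ('a \<times> bool) list \<Rightarrow> nat \<Rightarrow> 'a" where
  "path_vertex g W i = g \<otimes> word_eval G (take i W)"

lemma path_vertex_carrier: "g \<in> carrier G \<Longrightarrow> is_word X W \<Longrightarrow> path_vertex g W i \<in> carrier G"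
  by (simp add: path_vertex_def word_eval_carrier is_word_take)

lemma path_vertex_0 [simp]: "g \<in> carrier G \<Longrightarrow> path_vertex g W 0 = g"
  by (simp add: path_vertex_def)

lemma path_vertex_length: "path_vertex g W (length W) = g \<otimes> word_eval G W"
  by (simp add: path_vertex_def)

lemma path_vertex_Suc:
  assumes "g \<in> carrier G" "is_word X W" "i < length W"
  shows "path_vertex g W (Suc i) = path_vertex g W i \<otimes> letter_val G (W ! i)"
  unfolding path_vertex_def word_eval_take_Suc[OF assms(2,3)]
  by (rule m_assoc[symmetric])
    (auto simp: assms word_eval_carrier is_word_take letter_val_carrier is_word_nth)

lemma path_vertex_Suc_inverse:
  assumes "g \<in> carrier G" "is_word X W" "i < length W" "\<not> snd (W ! i)"
  shows "path_vertex g W (Suc i) \<otimes> fst (W ! i) = path_vertex g W i"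
proof -
  have x: "fst (W ! i) \<in> carrier G"
    using is_word_nth[OF assms(2,3)] gens_carrier by auto
  have "path_vertex g W (Suc i) = path_vertex g W i \<otimes> inv (fst (W ! i))"
    using path_vertex_Suc[OF assms(1-3)] assms(4) by (simp add: letter_val_def)
  then show ?thesis
    using x path_vertex_carrier[OF assms(1,2)] by (simp add: m_assoc)
qed

lemma path_vertex_drop:
  assumes "g \<in> carrier G" "is_word X W" "i \<le> j"
  shows "path_vertex g W j = path_vertex g W i \<otimes> word_eval G (take (j - i) (drop i W))"
proof -
  have "take j W = take i W @ take (j - i) (drop i W)"
    using assms(3) by (metis le_add_diff_inverse take_add)
  then show ?thesis
    using assms by (simp add: path_vertex_def word_eval_append is_word_take is_word_drop m_assoc
        word_eval_carrier)
qed

lemma word_dist_path_vertex_le: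
  assumes "g \<in> carrier G" "is_word X W" "i \<le> j"
  shows "d (path_vertex g W i) (path_vertex g W j) \<le> j - i"
proof -
  have "d (path_vertex g W i) (path_vertex g W j) \<le> length (take (j - i) (drop i W))"
    unfolding path_vertex_drop[OF assms]
    by (rule word_dist_le_length) (auto simp: path_vertex_carrier assms is_word_take is_word_drop)
  then show ?thesis by simp
qed

lemma word_dist_path_vertex_abs_le:
  assumes g: "g \<in> carrier G" and W: "is_word X W"
  shows "real (d (path_vertex g W i) (path_vertex g W j)) \<le> \<bar>real i - real j\<bar>"
proof (cases "i \<le> j")
  case True
  then show ?thesis using word_dist_path_vertex_le[OF g W True] by simp
next
  case False
  then have "d (path_vertex g W j) (path_vertex g W i) \<le> i - j"
    using word_dist_path_vertex_le[OF g W, of j i] by simp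
  then show ?thesis
    using word_dist_sym[OF path_vertex_carrier[OF g W] path_vertex_carrier[OF g W], of i j] False
    by simp
qed

lemma word_path_before_end:
  assumes "0 \<le> s" "s < real (length W)" "i = nat \<lfloor>s\<rfloor>"
  shows "i < length W" "real i \<le> s" "s < real i + 1"
    "snd (W ! i) \<Longrightarrow> word_path G g W s = Edge (path_vertex g W i) (fst (W ! i)) (s - real i)"
    "\<not> snd (W ! i) \<Longrightarrow> g \<in> carrier G \<Longrightarrow> is_word X W \<Longrightarrow>
       word_path G g W s = Edge (path_vertex g W (Suc i)) (fst (W ! i)) (1 - (s - real i))"
proof -
  show i: "real i \<le> s" "s < real i + 1"
    using assms by linarith+
  then show i_less: "i < length W"
    using assms by linarith
  show "snd (W ! i) \<Longrightarrow> word_path G g W s = Edge (path_vertex g W i) (fst (W ! i)) (s - real i)"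
    using assms by (simp add: word_path_def path_vertex_def Let_def)
  assume "\<not> snd (W ! i)" "g \<in> carrier G" "is_word X W"
  then show "word_path G g W s = Edge (path_vertex g W (Suc i)) (fst (W ! i)) (1 - (s - real i))"
    using assms i_less
    by (simp add: word_path_def Let_def path_vertex_Suc letter_val_def path_vertex_def[symmetric])
qed

lemma word_path_end: "word_path G g W (real (length W)) = Vert (path_vertex g W (length W))"
  by (simp add: word_path_def path_vertex_def)

lemma valid_word_path:
  assumes g: "g \<in> carrier G" and W: "is_word X W" and s: "0 \<le> s" "s \<le> real (length W)"
  shows "valid_point G X (word_path G g W s)"
proof (cases "s < real (length W)")
  case True
  define i where "i = nat \<lfloor>s\<rfloor>"
  note L = word_path_before_end[OF s(1) True i_def]
  have x: "fst (W ! i) \<in> X"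
    using is_word_nth[OF W L(1)] .
  show ?thesis
  proof (cases "snd (W ! i)")
    case True
    then show ?thesis using L(2,3) L(4)[OF True] x path_vertex_carrier[OF g W] by auto
  next
    case False
    then show ?thesis using L(2,3) L(5)[OF False g W] x path_vertex_carrier[OF g W] by auto
  qed
next
  case False
  then have "s = length W" using s by auto
  then show ?thesis using path_vertex_carrier[OF g W] by (simp add: word_path_end)
qed

lemma ends_word_path_before_end:
  assumes g: "g \<in> carrier G" and W: "is_word X W" and s: "0 \<le> s" "s < real (length W)"
    and i: "i = nat \<lfloor>s\<rfloor>"
  shows "set (ends G (word_path G g W s)) =
    {(path_vertex g W i, s - real i), (path_vertex g W (Suc i), real (Suc i) - s)}"
proof -
  note L = word_path_before_end[OF s i]
  show ?thesis
  proof (cases "snd (W ! i)")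
    case True
    then show ?thesis
      using L(4)[OF True] path_vertex_Suc[OF g W L(1)] by (auto simp: letter_val_def)
  next
    case False
    then show ?thesis
      using L(5)[OF False g W] path_vertex_Suc_inverse[OF g W L(1) False] by auto
  qed
qed

lemma ends_word_path:
  assumes g: "g \<in> carrier G" and W: "is_word X W" and s: "0 \<le> s" "s \<le> real (length W)"
    and e: "(u, a) \<in> set (ends G (word_path G g W s))"
  shows "\<exists>j \<le> length W. u = path_vertex g W j \<and> a = \<bar>s - real j\<bar> \<and> \<bar>s - real j\<bar> \<le> 1"
proof (cases "s < real (length W)")
  case True
  define i where "i = nat \<lfloor>s\<rfloor>"
  note L = word_path_before_end[OF s(1) True i_def]
  have "u = path_vertex g W i \<and> a = s - real i \<or> u = path_vertex g W (Suc i) \<and> a = real (Suc i) - s"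
    using e ends_word_path_before_end[OF g W s(1) True i_def] by auto
  then show ?thesis
  proof
    assume "u = path_vertex g W i \<and> a = s - real i"
    then show ?thesis using L(1-3) by (intro exI[of _ i]) auto
  next
    assume "u = path_vertex g W (Suc i) \<and> a = real (Suc i) - s"
    then show ?thesis using L(1-3) by (intro exI[of _ "Suc i"]) auto
  qed
next
  case False
  then have "s = length W" using s by auto
  then show ?thesis using e by (auto simp: word_path_end)
qed

lemma word_dist_cong: "inv u \<otimes> v = inv u' \<otimes> v' \<Longrightarrow> d u v = d u' v'"
  by (simp add: word_dist_def)

lemma word_dist_path_vertex:
  assumes "g \<in> carrier G" "is_word X W" "i \<le> j"
  shows "d (path_vertex g W i) (path_vertex g W j) = d \<one> (word_eval G (take (j - i) (drop i W)))"
  using assms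
  by (intro word_dist_cong) (simp add: path_vertex_drop path_vertex_carrier word_eval_carrier
      is_word_take is_word_drop m_assoc[symmetric])

lemma word_dist_path_vertex_split:
  assumes g: "g \<in> carrier G" and W: "is_word X W" and ikj: "i \<le> k" "k \<le> j"
    and geo: "d (path_vertex g W i) (path_vertex g W j) = j - i"
  shows "d (path_vertex g W i) (path_vertex g W k) = k - i"
    and "d (path_vertex g W k) (path_vertex g W j) = j - k"
proof -
  have "j - i \<le> d (path_vertex g W i) (path_vertex g W k)
      + d (path_vertex g W k) (path_vertex g W j)"
    using geo word_dist_triangle path_vertex_carrier[OF g W] by metis
  moreover have "d (path_vertex g W i) (path_vertex g W k) \<le> k - i"
    and "d (path_vertex g W k) (path_vertex g W j) \<le> j - k"
    using word_dist_path_vertex_le[OF g W] ikj by auto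
  ultimately show "d (path_vertex g W i) (path_vertex g W k) = k - i"
    and "d (path_vertex g W k) (path_vertex g W j) = j - k"
    using ikj by linarith+
qed

subsection \<open>Distances in the Cayley graph\<close>

definition cdist_candidates :: "'a cpoint \<Rightarrow> 'a cpoint \<Rightarrow> real list" where
  "cdist_candidates p q =
     [a + real (d u v) + b. (u, a) \<leftarrow> ends G p, (v, b) \<leftarrow> ends G q] @ same_edge_dist p q"

lemma cdist_eq_Min_candidates: "cdist G X p q = Min (set (cdist_candidates p q))"
  by (simp add: cdist_def cdist_candidates_def)

lemma mem_cdist_candidates:
  "e \<in> set (cdist_candidates p q) \<longleftrightarrow>
     (\<exists>u a v b. (u, a) \<in> set (ends G p) \<and> (v, b) \<in> set (ends G q) \<and> e = a + real (d u v) + b)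
     \<or> e \<in> set (same_edge_dist p q)"
  unfolding cdist_candidates_def set_append set_concat set_map by (force split: prod.splits)

lemma cdist_candidates_nonempty: "set (cdist_candidates p q) \<noteq> {}"
proof -
  obtain u a where "(u, a) \<in> set (ends G p)" by (cases p) auto
  moreover obtain v b where "(v, b) \<in> set (ends G q)" by (cases q) auto
  ultimately have "a + real (d u v) + b \<in> set (cdist_candidates p q)"
    unfolding mem_cdist_candidates by blast
  then show ?thesis by auto
qed

lemma cdist_le_candidate: "e \<in> set (cdist_candidates p q) \<Longrightarrow> cdist G X p q \<le> e"
  unfolding cdist_eq_Min_candidates by (rule Min_le) auto

lemma cdist_ge_candidates: "(\<And>e. e \<in> set (cdist_candidates p q) \<Longrightarrow> r \<le> e) \<Longrightarrow> r \<le> cdist G X p q"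
  unfolding cdist_eq_Min_candidates by (rule Min.boundedI[OF finite_set cdist_candidates_nonempty])

lemma cdist_in_candidates: "cdist G X p q \<in> set (cdist_candidates p q)"
  unfolding cdist_eq_Min_candidates by (rule Min_in[OF finite_set cdist_candidates_nonempty])

lemma same_edge_distD:
  "e \<in> set (same_edge_dist p q) \<Longrightarrow> \<exists>g x s t. p = Edge g x s \<and> q = Edge g x t \<and> e = \<bar>s - t\<bar>"
  by (cases p; cases q) (auto split: if_splits)

lemma ends_carrier: "valid_point G X p \<Longrightarrow> (u, a) \<in> set (ends G p) \<Longrightarrow> u \<in> carrier G"
  using gens_carrier by (cases p) auto

lemma ends_nonneg: "valid_point G X p \<Longrightarrow> (u, a) \<in> set (ends G p) \<Longrightarrow> 0 \<le> a"
  by (cases p) auto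

lemma cdist_nonneg:
  assumes "valid_point G X p" "valid_point G X q"
  shows "0 \<le> cdist G X p q"
proof (rule cdist_ge_candidates)
  fix e
  assume "e \<in> set (cdist_candidates p q)"
  then consider u a v b where "(u, a) \<in> set (ends G p)" "(v, b) \<in> set (ends G q)"
      "e = a + real (d u v) + b"
    | "e \<in> set (same_edge_dist p q)"
    using mem_cdist_candidates by blast
  then show "0 \<le> e"
  proof cases
    case 1
    then show ?thesis using ends_nonneg assms by fastforce
  next
    case 2
    then show ?thesis using same_edge_distD by fastforce
  qed
qed

lemma cdist_sym:
  assumes "valid_point G X p" "valid_point G X q"
  shows "cdist G X p q = cdist G X q p"
proof -
  have "e \<in> set (cdist_candidates q p)"
    if pq: "valid_point G X p" "valid_point G X q" and e: "e \<in> set (cdist_candidates p q)"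
    for e p q
  proof -
    consider u a v b where "(u, a) \<in> set (ends G p)" "(v, b) \<in> set (ends G q)"
        "e = a + real (d u v) + b"
      | "e \<in> set (same_edge_dist p q)"
      using e mem_cdist_candidates by blast
    then show ?thesis
    proof cases
      case 1
      then have "e = b + real (d v u) + a"
        using word_dist_sym ends_carrier pq by simp
      then show ?thesis using 1 mem_cdist_candidates by blast
    next
      case 2
      then have "e \<in> set (same_edge_dist q p)"
        by (cases p; cases q) (auto split: if_splits)
      then show ?thesis unfolding mem_cdist_candidates by simp
    qed
  qed
  then have "set (cdist_candidates p q) = set (cdist_candidates q p)"
    using assms by blast
  then show ?thesis unfolding cdist_eq_Min_candidates by simp
qed

lemma cdist_word_path_le:
  assumes g: "g \<in> carrier G" and W: "is_word X W"
    and st: "0 \<le> s" "s \<le> t" "t \<le> real (length W)"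
  shows "cdist G X (word_path G g W s) (word_path G g W t) \<le> t - s"
proof -
  have s: "0 \<le> s" "s \<le> real (length W)" and t: "0 \<le> t" "t \<le> real (length W)"
    using st by auto
  show ?thesis
  proof (cases "s < real (length W)")
    case False
    then have "s = length W" "t = length W"
      using st by auto
    then show ?thesis
      using cdist_le_candidate[of 0 "word_path G g W s" "word_path G g W t"]
        path_vertex_carrier[OF g W]
      by (simp add: word_path_end mem_cdist_candidates)
  next
    case sl: True
    define i where "i = nat \<lfloor>s\<rfloor>"
    note Ls = word_path_before_end[OF s(1) sl i_def]
    show ?thesis
    proof (cases "t < real (length W) \<and> nat \<lfloor>t\<rfloor> = i")
      case True
      then have tl: "t < real (length W)" and ti: "i = nat \<lfloor>t\<rfloor>"
        by auto
      note Lt = word_path_before_end[OF t(1) tl ti]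
      have "\<bar>s - t\<bar> \<in> set (cdist_candidates (word_path G g W s) (word_path G g W t))"
        using Ls(4,5) Lt(4,5) g W
        by (cases "snd (W ! i)") (auto simp: mem_cdist_candidates abs_minus_commute)
      then show ?thesis
        using cdist_le_candidate st by fastforce
    next
      case False
      obtain j where j: "Suc i \<le> j" "j \<le> length W" "real j \<le> t"
        "(path_vertex g W j, t - real j) \<in> set (ends G (word_path G g W t))"
      proof (cases "t < real (length W)")
        case True
        define j where "j = nat \<lfloor>t\<rfloor>"
        note Lt = word_path_before_end[OF t(1) True j_def]
        have "i \<le> j"
          using st unfolding i_def j_def by (simp add: floor_mono nat_mono)
        then show ?thesis
          using that[of j] False True Lt(1,2) ends_word_path_before_end[OF g W t(1) True j_def]
            j_def
          by force
      next
        case False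
        then show ?thesis
          using that[of "length W"] Ls(1) t by (simp add: word_path_end)
      qed
      have "(path_vertex g W (Suc i), real (Suc i) - s) \<in> set (ends G (word_path G g W s))"
        using ends_word_path_before_end[OF g W s(1) sl i_def] by simp
      then have "real (Suc i) - s + real (d (path_vertex g W (Suc i)) (path_vertex g W j))
          + (t - real j)
          \<in> set (cdist_candidates (word_path G g W s) (word_path G g W t))"
        using j(4) unfolding mem_cdist_candidates by blast
      moreover have "d (path_vertex g W (Suc i)) (path_vertex g W j) \<le> j - Suc i"
        using word_dist_path_vertex_le[OF g W j(1)] .
      ultimately show ?thesis
        using cdist_le_candidate j(1) by fastforce
    qed
  qed
qed

lemma cdist_word_path_ge_path_vertex:
  assumes g: "g \<in> carrier G" and U: "is_word X U"
    and s: "0 \<le> s" "s \<le> real (length U)" and t: "0 \<le> t" "t \<le> real (length U)"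
  obtains j j' where "j \<le> length U" "j' \<le> length U" "\<bar>s - real j\<bar> \<le> 1" "\<bar>t - real j'\<bar> \<le> 1"
    "real (d (path_vertex g U j) (path_vertex g U j'))
      \<le> cdist G X (word_path G g U s) (word_path G g U t)"
proof -
  let ?e = "cdist G X (word_path G g U s) (word_path G g U t)"
  consider u a v b where "(u, a) \<in> set (ends G (word_path G g U s))"
      "(v, b) \<in> set (ends G (word_path G g U t))" "?e = a + real (d u v) + b"
    | "?e \<in> set (same_edge_dist (word_path G g U s) (word_path G g U t))"
    using cdist_in_candidates mem_cdist_candidates by blast
  then show ?thesis
  proof cases
    case 1
    obtain j where j: "j \<le> length U" "u = path_vertex g U j" "a = \<bar>s - real j\<bar>" "\<bar>s - real j\<bar> \<le> 1"
      using ends_word_path[OF g U s 1(1)] by blast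
    obtain j' where j': "j' \<le> length U" "v = path_vertex g U j'" "b = \<bar>t - real j'\<bar>"
        "\<bar>t - real j'\<bar> \<le> 1"
      using ends_word_path[OF g U t 1(2)] by blast
    show ?thesis
      using that[OF j(1) j'(1) j(4) j'(4)] j j' 1(3) by auto
  next
    case 2
    obtain g0 x s' t' where E: "word_path G g U s = Edge g0 x s'" "word_path G g U t = Edge g0 x t'"
        "?e = \<bar>s' - t'\<bar>"
      using same_edge_distD[OF 2] by blast
    have "(g0, s') \<in> set (ends G (word_path G g U s))" "(g0, t') \<in> set (ends G (word_path G g U t))"
      using E by auto
    then obtain j j' where j: "j \<le> length U" "g0 = path_vertex g U j" "\<bar>s - real j\<bar> \<le> 1"
      and j': "j' \<le> length U" "g0 = path_vertex g U j'" "\<bar>t - real j'\<bar> \<le> 1"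
      using ends_word_path[OF g U s] ends_word_path[OF g U t] by meson
    show ?thesis
      using that[OF j(1) j'(1) j(3) j'(3)] j j' E(3) path_vertex_carrier[OF g U] by auto
  qed
qed

definition geodesic_word :: "('a \<times> bool) list \<Rightarrow> bool" where
  "geodesic_word W \<longleftrightarrow> is_word X W \<and> d \<one> (word_eval G W) = length W"

lemma geodesic_word_exists:
  assumes "u \<in> carrier G" "v \<in> carrier G"
  shows "\<exists>W. geodesic_word W \<and> path_vertex u W (length W) = v"
proof -
  obtain w where w: "is_word X w" "length w = d u v" "word_eval G w = inv u \<otimes> v"
    using word_dist_attained assms by blast
  have "d \<one> (word_eval G w) = d u v"
    using w(3) assms by (intro word_dist_cong) simp
  moreover have "path_vertex u w (length w) = v"
    unfolding path_vertex_length w(3) using assms by (simp add: m_assoc[symmetric])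
  ultimately show ?thesis
    using w by (intro exI[of _ w]) (simp add: geodesic_word_def)
qed

lemma geodesic_word_dist_path_vertex:
  assumes g: "g \<in> carrier G" and geo: "geodesic_word W" and ij: "i \<le> j" "j \<le> length W"
  shows "d (path_vertex g W i) (path_vertex g W j) = j - i"
proof -
  have W: "is_word X W"
    using geo by (simp add: geodesic_word_def)
  have "d (path_vertex g W 0) (path_vertex g W (length W)) = length W - 0"
    using word_dist_path_vertex[OF g W, of 0 "length W"] geo by (simp add: geodesic_word_def)
  then have "d (path_vertex g W 0) (path_vertex g W j) = j - 0"
    using word_dist_path_vertex_split(1)[OF g W _ ij(2)] by simp
  from word_dist_path_vertex_split(2)[OF g W _ ij(1) this] show ?thesis
    by simp
qed

lemma geodesic_word_dist_path_vertex_abs: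
  assumes g: "g \<in> carrier G" and geo: "geodesic_word W" and ij: "i \<le> length W" "j \<le> length W"
  shows "real (d (path_vertex g W i) (path_vertex g W j)) = \<bar>real i - real j\<bar>"
proof -
  have W: "is_word X W"
    using geo by (simp add: geodesic_word_def)
  show ?thesis
  proof (cases "i \<le> j")
    case True
    then show ?thesis using geodesic_word_dist_path_vertex[OF g geo True ij(2)] by simp
  next
    case False
    then show ?thesis
      using geodesic_word_dist_path_vertex[OF g geo _ ij(1), of j]
        word_dist_sym[OF path_vertex_carrier[OF g W] path_vertex_carrier[OF g W], of i j]
      by simp
  qed
qed

lemma geodesic_word_path_vertex_inj:
  assumes g: "g \<in> carrier G" and geo: "geodesic_word W" and ij: "i \<le> length W" "j \<le> length W"
    and eq: "path_vertex g W i = path_vertex g W j"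
  shows "i = j"
proof -
  have W: "is_word X W"
    using geo by (simp add: geodesic_word_def)
  have "d (path_vertex g W i) (path_vertex g W j) = 0"
    using eq path_vertex_carrier[OF g W] by simp
  then show ?thesis
    using geodesic_word_dist_path_vertex_abs[OF g geo ij] by simp
qed

lemma geodesic_word_path_vertex_between:
  assumes g: "g \<in> carrier G" and geo: "geodesic_word W" and j: "j \<le> length W"
  shows "d g (path_vertex g W j) + d (path_vertex g W j) (path_vertex g W (length W))
    = d g (path_vertex g W (length W))"
  using geodesic_word_dist_path_vertex[OF g geo, of 0 j] geodesic_word_dist_path_vertex[OF g geo j]
    geodesic_word_dist_path_vertex[OF g geo, of 0 "length W"] g j
  by simp

lemma geodesic_word_path_candidate_ge:
  assumes g: "g \<in> carrier G" and geo: "geodesic_word W"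
    and s: "0 \<le> s" "s \<le> real (length W)" and t: "0 \<le> t" "t \<le> real (length W)"
    and e: "e \<in> set (cdist_candidates (word_path G g W s) (word_path G g W t))"
  shows "\<bar>s - t\<bar> \<le> e"
proof -
  have W: "is_word X W"
    using geo by (simp add: geodesic_word_def)
  consider u a v b where "(u, a) \<in> set (ends G (word_path G g W s))"
      "(v, b) \<in> set (ends G (word_path G g W t))" "e = a + real (d u v) + b"
    | "e \<in> set (same_edge_dist (word_path G g W s) (word_path G g W t))"
    using e mem_cdist_candidates by blast
  then show ?thesis
  proof cases
    case 1
    obtain j where j: "j \<le> length W" "u = path_vertex g W j" "a = \<bar>s - real j\<bar>"
      using ends_word_path[OF g W s 1(1)] by blast
    obtain j' where j': "j' \<le> length W" "v = path_vertex g W j'" "b = \<bar>t - real j'\<bar>"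
      using ends_word_path[OF g W t 1(2)] by blast
    have "e = \<bar>s - real j\<bar> + \<bar>real j - real j'\<bar> + \<bar>t - real j'\<bar>"
      using 1(3) j j' geodesic_word_dist_path_vertex_abs[OF g geo j(1) j'(1)] by simp
    then show ?thesis by (simp add: abs_if split: if_splits)
  next
    case 2
    obtain g0 x s' t' where E: "word_path G g W s = Edge g0 x s'" "word_path G g W t = Edge g0 x t'"
        "e = \<bar>s' - t'\<bar>"
      using same_edge_distD[OF 2] by blast
    have sl: "s < real (length W)" and tl: "t < real (length W)"
      using E(1,2) s t word_path_end[of g W] by (fastforce dest: antisym)+
    define i where "i = nat \<lfloor>s\<rfloor>"
    define j where "j = nat \<lfloor>t\<rfloor>"
    note Ls = word_path_before_end[OF s(1) sl i_def]
    note Lt = word_path_before_end[OF t(1) tl j_def]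
    txt \<open>Both points lie on the edge from \<open>g0\<close> to \<open>g0 x\<close>, whose ends are consecutive vertices
      of the path; as these are pairwise distinct, the two points lie in the same unit interval.\<close>
    have "fst ` set (ends G (word_path G g W s)) = fst ` set (ends G (word_path G g W t))"
      using E by simp
    then have "{path_vertex g W i, path_vertex g W (Suc i)}
        = {path_vertex g W j, path_vertex g W (Suc j)}"
      using ends_word_path_before_end[OF g W s(1) sl i_def]
        ends_word_path_before_end[OF g W t(1) tl j_def]
      by simp
    then have "i = j \<or> i = Suc j \<and> Suc i = j"
      using geodesic_word_path_vertex_inj[OF g geo] Ls(1) Lt(1)
      by (auto simp: doubleton_eq_iff Suc_le_eq)
    then have "i = j"
      by linarith
    then show ?thesis
      using E Ls(4,5) Lt(4,5) g W by (cases "snd (W ! j)") (auto simp: abs_minus_commute)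
  qed
qed

lemma geodesic_word_path:
  assumes g: "g \<in> carrier G" and geo: "geodesic_word W"
  shows "geodesic G X (word_path G g W) (real (length W))"
proof -
  have W: "is_word X W"
    using geo by (simp add: geodesic_word_def)
  have le: "cdist G X (word_path G g W s) (word_path G g W t) = t - s"
    if "0 \<le> s" "s \<le> t" "t \<le> real (length W)" for s t
  proof -
    have "\<bar>s - t\<bar> \<le> cdist G X (word_path G g W s) (word_path G g W t)"
      by (rule cdist_ge_candidates, rule geodesic_word_path_candidate_ge[OF g geo])
        (use that in auto)
    then show ?thesis
      using cdist_word_path_le[OF g W that] that by linarith
  qed
  show ?thesis
    unfolding geodesic_def
  proof (intro conjI ballI)
    fix s
    assume "s \<in> {0..real (length W)}"
    then show "valid_point G X (word_path G g W s)"
      using valid_word_path[OF g W] by auto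
  next
    fix s t
    assume s: "s \<in> {0..real (length W)}" and t: "t \<in> {0..real (length W)}"
    show "cdist G X (word_path G g W s) (word_path G g W t) = \<bar>s - t\<bar>"
    proof (cases "s \<le> t")
      case True
      then show ?thesis using le s t by auto
    next
      case False
      have "cdist G X (word_path G g W s) (word_path G g W t)
          = cdist G X (word_path G g W t) (word_path G g W s)"
        using valid_word_path[OF g W] s t by (intro cdist_sym) auto
      then show ?thesis
        using le[of t s] s t False by auto
    qed
  qed simp
qed

subsection \<open>Slim triangles read off at vertices\<close>

lemma cdist_word_path_start:
  assumes a: "a \<in> carrier G" and W: "is_word X W"
  shows "cdist G X (Vert a) (word_path G a W 0) = 0"
proof -
  have "0 \<in> set (cdist_candidates (Vert a) (word_path G a W 0))"
  proof (cases "0 < real (length W)")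
    case True
    have "(path_vertex a W 0, 0 - real 0) \<in> set (ends G (word_path G a W 0))"
      using ends_word_path_before_end[OF a W _ True] by simp
    then show ?thesis
      unfolding mem_cdist_candidates using a by (force intro!: exI[of _ a])
  next
    case False
    then have "word_path G a W 0 = Vert a"
      using word_path_end[of a W] a by simp
    then show ?thesis
      using a by (simp add: mem_cdist_candidates)
  qed
  then have "cdist G X (Vert a) (word_path G a W 0) \<le> 0"
    by (rule cdist_le_candidate)
  moreover have "0 \<le> cdist G X (Vert a) (word_path G a W 0)"
    using cdist_nonneg valid_word_path[OF a W] a by simp
  ultimately show ?thesis by simp
qed

lemma ends_near_path_vertex:
  assumes a: "a \<in> carrier G" and S: "is_word X S" and t0: "t0 \<le> length S"
    and q: "valid_point G X q" and le: "cdist G X (word_path G a S (real t0)) q \<le> r"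
  shows "\<exists>v b. (v, b) \<in> set (ends G q) \<and> real (d (path_vertex a S t0) v) \<le> r"
proof -
  let ?p = "word_path G a S (real t0)"
  have p: "valid_point G X ?p"
    using valid_word_path[OF a S] t0 by simp
  consider u a' v b where "(u, a') \<in> set (ends G ?p)" "(v, b) \<in> set (ends G q)"
      "cdist G X ?p q = a' + real (d u v) + b"
    | "cdist G X ?p q \<in> set (same_edge_dist ?p q)"
    using cdist_in_candidates mem_cdist_candidates by blast
  then show ?thesis
  proof cases
    case 1
    obtain j where j: "j \<le> length S" "u = path_vertex a S j" "a' = \<bar>real t0 - real j\<bar>"
      using ends_word_path[OF a S _ _ 1(1)] t0 by auto
    have "d (path_vertex a S t0) v \<le> d (path_vertex a S t0) u + d u v"
      using word_dist_triangle path_vertex_carrier[OF a S] j(2) ends_carrier[OF q 1(2)] by blast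
    moreover have "real (d (path_vertex a S t0) u) \<le> a'"
      using word_dist_path_vertex_abs_le[OF a S] j by simp
    moreover have "0 \<le> b"
      using ends_nonneg[OF q 1(2)] .
    ultimately show ?thesis
      using 1 le by (intro exI[of _ v] exI[of _ b]) auto
  next
    case 2
    obtain g0 x s' t' where E: "?p = Edge g0 x s'" "q = Edge g0 x t'"
      using same_edge_distD[OF 2] by blast
    have "real t0 < real (length S)"
      using E(1) t0 by (cases "real t0 < real (length S)") (auto simp: word_path_end)
    then have "(path_vertex a S t0, real t0 - real t0) \<in> set (ends G ?p)"
      using ends_word_path_before_end[OF a S] by simp
    then have "path_vertex a S t0 = g0 \<or> path_vertex a S t0 = g0 \<otimes> x"
      using E(1) by auto
    moreover have "0 \<le> r"
      using le cdist_nonneg[OF p q] by simp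
    ultimately show ?thesis
      using E(2) path_vertex_carrier[OF a S, of t0] by auto
  qed
qed

lemma ends_geodesic_word_path_between:
  assumes a: "a \<in> carrier G" and geo: "geodesic_word W"
    and t: "0 \<le> t" "t \<le> real (length W)" and v: "(v, b) \<in> set (ends G (word_path G a W t))"
  shows "v \<in> carrier G"
    and "d a v + d v (path_vertex a W (length W)) = d a (path_vertex a W (length W))"
proof -
  have W: "is_word X W"
    using geo by (simp add: geodesic_word_def)
  obtain j where "j \<le> length W" "v = path_vertex a W j"
    using ends_word_path[OF a W t v] by blast
  then show "v \<in> carrier G"
    and "d a v + d v (path_vertex a W (length W)) = d a (path_vertex a W (length W))"
    using path_vertex_carrier[OF a W] geodesic_word_path_vertex_between[OF a geo] by auto
qed

lemma hyperbolic_slim_vertices: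
  assumes hyp: "hyperbolic G X r"
    and z: "z \<in> carrier G" and a: "a \<in> carrier G" and c: "c \<in> carrier G"
    and W1: "geodesic_word W1" "path_vertex z W1 (length W1) = a"
    and S: "geodesic_word S" "path_vertex a S (length S) = c"
    and W3: "geodesic_word W3" "path_vertex c W3 (length W3) = z"
    and t0: "t0 \<le> length S"
  shows "\<exists>p \<in> carrier G. (d z p + d p a = d z a \<or> d c p + d p z = d c z)
    \<and> real (d (path_vertex a S t0) p) \<le> r"
proof -
  have iw: "is_word X W1" "is_word X S" "is_word X W3"
    using W1 S W3 by (auto simp: geodesic_word_def)
  let ?\<alpha> = "word_path G z W1" and ?\<beta> = "word_path G a S" and ?\<gamma> = "word_path G c W3"
  have "geodesic G X ?\<alpha> (length W1)" "geodesic G X ?\<beta> (length S)" "geodesic G X ?\<gamma> (length W3)"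
    using geodesic_word_path z a c W1 S W3 by auto
  moreover have "cdist G X (?\<alpha> (length W1)) (?\<beta> 0) = 0" "cdist G X (?\<beta> (length S)) (?\<gamma> 0) = 0"
    "cdist G X (?\<gamma> (length W3)) (?\<alpha> 0) = 0"
    using cdist_word_path_start[OF a iw(2)] cdist_word_path_start[OF c iw(3)]
      cdist_word_path_start[OF z iw(1)] W1 S W3
    by (simp_all add: word_path_end)
  ultimately have "side_slim G X r ?\<beta> (length S) ?\<gamma> (length W3) ?\<alpha> (length W1)"
    using hyp unfolding hyperbolic_def by blast
  then have "in_nbhd G X r (?\<beta> t0) ?\<gamma> (length W3) \<or> in_nbhd G X r (?\<beta> t0) ?\<alpha> (length W1)"
    unfolding side_slim_def using t0 by auto
  then show ?thesis
  proof
    assume "in_nbhd G X r (?\<beta> t0) ?\<gamma> (length W3)"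
    then obtain t where t: "0 \<le> t" "t \<le> real (length W3)" "cdist G X (?\<beta> t0) (?\<gamma> t) \<le> r"
      unfolding in_nbhd_def by auto
    obtain v b where vb: "(v, b) \<in> set (ends G (?\<gamma> t))" "real (d (path_vertex a S t0) v) \<le> r"
      using ends_near_path_vertex[OF a iw(2) t0 valid_word_path[OF c iw(3) t(1,2)] t(3)] by blast
    then show ?thesis
      using ends_geodesic_word_path_between[OF c W3(1) t(1,2) vb(1)] W3(2) by auto
  next
    assume "in_nbhd G X r (?\<beta> t0) ?\<alpha> (length W1)"
    then obtain t where t: "0 \<le> t" "t \<le> real (length W1)" "cdist G X (?\<beta> t0) (?\<alpha> t) \<le> r"
      unfolding in_nbhd_def by auto
    obtain v b where vb: "(v, b) \<in> set (ends G (?\<alpha> t))" "real (d (path_vertex a S t0) v) \<le> r"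
      using ends_near_path_vertex[OF a iw(2) t0 valid_word_path[OF z iw(1) t(1,2)] t(3)] by blast
    then show ?thesis
      using ends_geodesic_word_path_between[OF z W1(1) t(1,2) vb(1)] W1(2) by auto
  qed
qed

subsection \<open>Local geodesics are quasi-geodesics\<close>

definition local_geodesic_word :: "nat \<Rightarrow> ('a \<times> bool) list \<Rightarrow> bool" where
  "local_geodesic_word L U \<longleftrightarrow>
     is_word X U \<and> (\<forall>i n. n \<le> L \<longrightarrow> i + n \<le> length U \<longrightarrow> geodesic_word (take n (drop i U)))"

lemma local_geodesic_word_mono: "local_geodesic_word L U \<Longrightarrow> L' \<le> L \<Longrightarrow> local_geodesic_word L' U"
  by (auto simp: local_geodesic_word_def)

lemma local_geodesic_word_dist:
  assumes lg: "local_geodesic_word L U" and g: "g \<in> carrier G"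
    and ij: "i \<le> j" "j \<le> length U" "j - i \<le> L"
  shows "d (path_vertex g U i) (path_vertex g U j) = j - i"
proof -
  have U: "is_word X U" and "geodesic_word (take (j - i) (drop i U))"
    using lg ij by (auto simp: local_geodesic_word_def)
  then show ?thesis
    using word_dist_path_vertex[OF g U ij(1)] ij by (simp add: geodesic_word_def)
qed

lemma path_vertex_subword:
  assumes g: "g \<in> carrier G" and U: "is_word X U" and t: "t \<le> n"
  shows "path_vertex (path_vertex g U i) (take n (drop i U)) t = path_vertex g U (i + t)"
  using path_vertex_drop[OF g U, of i "i + t"] t by (simp add: path_vertex_def min_def)

text \<open>The vertex \<open>k\<close> of the triangle \<open>z, i, j\<close> is \<open>\<delta>\<close>-close to one of the other two sides.
  Near the side from \<open>z\<close> to \<open>i\<close>, hypothesis \<open>H\<close> would force \<open>k - i \<le> 2\<delta>\<close>; near the side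
  from \<open>j\<close> to \<open>z\<close>, the triangle inequality gives the claim.\<close>

lemma local_geodesic_step:
  assumes hyp: "hyperbolic G X (real \<delta>)" and g: "g \<in> carrier G" and U: "is_word X U"
    and z: "z \<in> carrier G" and ikj: "i \<le> k" "k \<le> j" "j \<le> length U"
    and geo: "d (path_vertex g U i) (path_vertex g U j) = j - i"
    and H: "d z (path_vertex g U i) + (k - i) \<le> d z (path_vertex g U k) + 2 * \<delta>"
    and big: "2 * \<delta> < k - i"
  shows "d z (path_vertex g U k) + (j - k) \<le> d z (path_vertex g U j) + 2 * \<delta>"
proof -
  let ?a = "path_vertex g U i" and ?b = "path_vertex g U k" and ?c = "path_vertex g U j"
  let ?S = "take (j - i) (drop i U)"
  have car: "\<And>i. path_vertex g U i \<in> carrier G"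
    using path_vertex_carrier[OF g U] .
  have S: "geodesic_word ?S" "path_vertex ?a ?S (length ?S) = ?c" "path_vertex ?a ?S (k - i) = ?b"
    using word_dist_path_vertex[OF g U] geo path_vertex_subword[OF g U] ikj
    by (auto simp: geodesic_word_def is_word_take is_word_drop U)
  have ab: "d ?a ?b = k - i" and bc: "d ?b ?c = j - k"
    using word_dist_path_vertex_split[OF g U _ _ geo] ikj by auto
  obtain W1 where W1: "geodesic_word W1" "path_vertex z W1 (length W1) = ?a"
    using geodesic_word_exists[OF z car] by blast
  obtain W3 where W3: "geodesic_word W3" "path_vertex ?c W3 (length W3) = z"
    using geodesic_word_exists[OF car z] by blast
  have "k - i \<le> length ?S"
    using ikj by simp
  from hyperbolic_slim_vertices[OF hyp z car car W1 S(1,2) W3 this]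
  obtain p where p: "p \<in> carrier G" "d z p + d p ?a = d z ?a \<or> d ?c p + d p z = d ?c z"
      "d ?b p \<le> \<delta>"
    using S(3) by auto
  have zb: "d z ?b \<le> d z p + d p ?b"
    by (rule word_dist_triangle[OF z p(1) car])
  have pb: "d p ?b = d ?b p"
    by (rule word_dist_sym[OF p(1) car])
  from p(2) show ?thesis
  proof
    assume zpa: "d z p + d p ?a = d z ?a"
    have "d ?a ?b \<le> d ?a p + d p ?b"
      by (rule word_dist_triangle[OF car p(1) car])
    moreover have "d ?a p = d p ?a"
      by (rule word_dist_sym[OF car p(1)])
    ultimately show ?thesis
      using H big zb pb p(3) zpa ab by linarith
  next
    assume cpz: "d ?c p + d p z = d ?c z"
    have "d ?b ?c \<le> d ?b p + d p ?c"
      by (rule word_dist_triangle[OF car p(1) car])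
    moreover have "d ?c p = d p ?c" "d p z = d z p" "d ?c z = d z ?c"
      using word_dist_sym p(1) z car by auto
    ultimately show ?thesis
      using cpz zb pb p(3) bc by linarith
  qed
qed

lemma local_geodesic_chain:
  assumes hyp: "hyperbolic G X (real \<delta>)" and lg: "local_geodesic_word (2 * m) U"
    and g: "g \<in> carrier G" and m: "2 * \<delta> < m"
  shows "i + l * m \<le> length U \<Longrightarrow>
    l * m \<le> d (path_vertex g U i) (path_vertex g U (i + l * m)) + 2 * \<delta> * l \<and>
    (\<forall>j. i + l * m \<le> j \<longrightarrow> j \<le> length U \<longrightarrow> j \<le> i + (l + 1) * m \<longrightarrow>
       d (path_vertex g U i) (path_vertex g U (i + l * m)) + (j - (i + l * m))
         \<le> d (path_vertex g U i) (path_vertex g U j) + 2 * \<delta>)"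
proof (induction l)
  case 0
  have "d (path_vertex g U i) (path_vertex g U j) = j - i"
    if "i \<le> j" "j \<le> length U" "j \<le> i + m" for j
    using local_geodesic_word_dist[OF lg g] that by auto
  then show ?case by auto
next
  case (Suc l)
  have U: "is_word X U"
    using lg by (simp add: local_geodesic_word_def)
  let ?a = "path_vertex g U i" and ?l = "i + l * m" and ?l' = "i + Suc l * m"
  have "?l \<le> length U"
    using Suc.prems by simp
  note IH = Suc.IH[OF this]
  have A: "d ?a (path_vertex g U ?l) + m \<le> d ?a (path_vertex g U ?l') + 2 * \<delta>"
    using IH Suc.prems by (auto dest!: spec[of _ ?l'])
  have B: "d ?a (path_vertex g U ?l') + (j - ?l') \<le> d ?a (path_vertex g U j) + 2 * \<delta>"
    if j: "?l' \<le> j" "j \<le> length U" "j \<le> i + (Suc l + 1) * m" for j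
  proof (rule local_geodesic_step[OF hyp g U path_vertex_carrier[OF g U]])
    show "?l \<le> ?l'" "?l' \<le> j" "j \<le> length U"
      using j by auto
    show "d (path_vertex g U ?l) (path_vertex g U j) = j - ?l"
      using j by (intro local_geodesic_word_dist[OF lg g]) auto
    show "d ?a (path_vertex g U ?l) + (?l' - ?l) \<le> d ?a (path_vertex g U ?l') + 2 * \<delta>"
      using A by simp
    show "2 * \<delta> < ?l' - ?l"
      using m by simp
  qed
  show ?case
    using A B IH by auto
qed

lemma local_geodesic_defect:
  assumes hyp: "hyperbolic G X (real \<delta>)" and lg: "local_geodesic_word (2 * m) U"
    and g: "g \<in> carrier G" and m: "2 * \<delta> < m" and ij: "i \<le> j" "j \<le> length U"
  shows "j - i \<le> d (path_vertex g U i) (path_vertex g U j) + 2 * \<delta> * ((j - i) div m + 1)"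
proof -
  define l where "l = (j - i) div m"
  have l1: "l * m \<le> j - i"
    unfolding l_def using div_mult_mod_eq[of "j - i" m] by linarith
  have l2: "j - i < (l + 1) * m"
    unfolding l_def using m
    by (metis add.commute div_mult_mod_eq mod_less_divisor add_mult_distrib mult_1
        nat_add_left_cancel_less gr_zeroI not_less0)
  have "l * m \<le> d (path_vertex g U i) (path_vertex g U (i + l * m)) + 2 * \<delta> * l"
    and "d (path_vertex g U i) (path_vertex g U (i + l * m)) + (j - (i + l * m))
      \<le> d (path_vertex g U i) (path_vertex g U j) + 2 * \<delta>"
    using local_geodesic_chain[OF hyp lg g m, of i l] l1 l2 ij by auto
  then show ?thesis
    unfolding l_def[symmetric] using l1 by (simp add: algebra_simps)
qed

lemma local_geodesic_vertex_estimate: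
  assumes hyp: "hyperbolic G X (real \<delta>)" and lg: "local_geodesic_word (180 * \<delta>) U"
    and \<delta>: "0 < \<delta>" and g: "g \<in> carrier G" and j: "j \<le> length U" "j' \<le> length U"
  shows "44 * \<bar>real j - real j'\<bar>
    \<le> 45 * real (d (path_vertex g U j) (path_vertex g U j')) + 90 * real \<delta>"
proof -
  have U: "is_word X U"
    using lg by (simp add: local_geodesic_word_def)
  have "44 * (real j' - real j)
      \<le> 45 * real (d (path_vertex g U j) (path_vertex g U j')) + 90 * real \<delta>"
    if jj: "j \<le> j'" "j' \<le> length U" for j j'
  proof -
    let ?n = "j' - j" and ?m = "90 * \<delta>"
    have "?n \<le> d (path_vertex g U j) (path_vertex g U j') + 2 * \<delta> * (?n div ?m + 1)"
      using local_geodesic_defect[OF hyp _ g _ jj] lg \<delta> by simp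
    moreover have "?n div ?m * ?m \<le> ?n"
      using div_mult_mod_eq[of ?n ?m] by linarith
    ultimately have "44 * ?n \<le> 45 * d (path_vertex g U j) (path_vertex g U j') + 90 * \<delta>"
      by (simp add: algebra_simps)
    then show ?thesis
      using jj by (simp add: of_nat_diff flip: of_nat_le_iff)
  qed
  from this[of j j'] this[of j' j] j
    word_dist_sym[OF path_vertex_carrier[OF g U] path_vertex_carrier[OF g U], of j j']
  show ?thesis by (cases "j \<le> j'") simp_all
qed

lemma local_geodesic_quasi_geodesic:
  assumes hyp: "hyperbolic G X (real \<delta>)" and lg: "local_geodesic_word (180 * \<delta>) U"
    and \<delta>: "0 < \<delta>"
  shows "quasi_geodesic_word G X 4 (2520 * real \<delta>) U"
  unfolding quasi_geodesic_word_def
proof (intro ballI)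
  fix g s t
  assume g: "g \<in> carrier G" and s: "s \<in> {0..real (length U)}" and t: "t \<in> {0..real (length U)}"
  have U: "is_word X U"
    using lg by (simp add: local_geodesic_word_def)
  let ?e = "cdist G X (word_path G g U s) (word_path G g U t)"
  have "0 \<le> ?e"
    using cdist_nonneg valid_word_path[OF g U] s t by auto
  moreover obtain j j' where "j \<le> length U" "j' \<le> length U" "\<bar>s - real j\<bar> \<le> 1" "\<bar>t - real j'\<bar> \<le> 1"
    "real (d (path_vertex g U j) (path_vertex g U j')) \<le> ?e"
    using cdist_word_path_ge_path_vertex[OF g U, of s t] s t by auto
  moreover note local_geodesic_vertex_estimate[OF hyp lg \<delta> g this(1,2)]
  moreover have "1 \<le> real \<delta>"
    using \<delta> by simp
  ultimately show "\<bar>s - t\<bar> \<le> 4 * ?e + 2520 * real \<delta>"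
    by (simp add: abs_if split: if_splits)
qed

subsection \<open>Powers of cyclically minimal words\<close>

lemma cyclically_minimal_word_inv:
  assumes cm: "cyclically_minimal G X V"
  shows "cyclically_minimal G X (word_inv V)"
  unfolding cyclically_minimal_def
proof (intro conjI allI impI)
  have V: "is_word X V"
    using cm by (simp add: cyclically_minimal_def)
  then show "is_word X (word_inv V)"
    by (rule is_word_word_inv)
  fix W h
  assume W: "is_word X W" and h: "h \<in> carrier G"
    and conj: "word_eval G W = inv h \<otimes> word_eval G (word_inv V) \<otimes> h"
  have "word_eval G (word_inv W) = inv (inv h \<otimes> inv (word_eval G V) \<otimes> h)"
    using conj word_eval_word_inv[OF W] word_eval_word_inv[OF V] by simp
  also have "\<dots> = inv h \<otimes> word_eval G V \<otimes> h"
    using h word_eval_carrier[OF V] by (simp add: inv_mult_group m_assoc)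
  finally have "length V \<le> length (word_inv W)"
    using cm is_word_word_inv[OF W] h unfolding cyclically_minimal_def by blast
  then show "length (word_inv V) \<le> length W"
    by simp
qed

lemma cyclically_minimal_power_local_geodesic:
  assumes cm: "cyclically_minimal G X V"
  shows "local_geodesic_word (length V) (concat (replicate K V))"
  unfolding local_geodesic_word_def
proof (intro conjI allI impI)
  have V: "is_word X V"
    using cm by (simp add: cyclically_minimal_def)
  then show "is_word X (concat (replicate K V))"
    by (rule is_word_concat_replicate)
  fix i n
  assume n: "n \<le> length V" and i: "i + n \<le> length (concat (replicate K V))"
  define c where "c = word_eval G (take (i mod length V) V)"
  define R where "R = rotate (i mod length V) V"
  have R: "is_word X R" "length R = length V" "word_eval G R = inv c \<otimes> word_eval G V \<otimes> c"
    using V word_eval_rotate[OF V] by (auto simp: R_def c_def is_word_rotate)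
  have S: "take n (drop i (concat (replicate K V))) = take n R"
    using subword_concat_replicate[OF n] i by (simp add: R_def length_concat sum_list_replicate)
  obtain w where w: "is_word X w" "length w = d \<one> (word_eval G (take n R))"
    "word_eval G w = word_eval G (take n R)"
    using word_dist_attained[of \<one> "word_eval G (take n R)"] word_eval_carrier is_word_take R(1)
    by auto
  have "word_eval G (w @ drop n R) = word_eval G (take n R) \<otimes> word_eval G (drop n R)"
    using w R(1) by (simp add: word_eval_append is_word_drop)
  also have "\<dots> = word_eval G R"
    using word_eval_append[OF is_word_take[OF R(1)] is_word_drop[OF R(1)], of n n] by simp
  finally have "word_eval G (w @ drop n R) = word_eval G R" .
  then have "length V \<le> length (w @ drop n R)"
    using cm w(1) R(3) is_word_drop[OF R(1)] word_eval_carrier[OF is_word_take[OF V]]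
    unfolding cyclically_minimal_def c_def by (metis is_word_simps(3))
  moreover have "d \<one> (word_eval G (take n R)) \<le> n"
    using word_dist_le[OF is_word_take[OF R(1)], of n \<one> "word_eval G (take n R)"]
      word_eval_carrier[OF is_word_take[OF R(1)]] n R(2)
    by simp
  ultimately show "geodesic_word (take n (drop i (concat (replicate K V))))"
    using S w(2) R(1,2) n by (simp add: geodesic_word_def is_word_take)
qed

end

theorem lemma3p7:
  fixes G :: "('g, 'b) monoid_scheme" and X :: "'g set" and \<delta> :: nat
    and V :: "('g \<times> bool) list" and k :: int
  assumes "group G" and "finite X" and "X \<subseteq> carrier G" and "generate G X = carrier G"
    and "\<delta> > 0" and "hyperbolic G X (real \<delta>)"
    and "cyclically_minimal G X V" and "length V \<ge> 180 * \<delta>"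
  shows "quasi_geodesic_word G X 4 (2520 * real \<delta>) (word_pow V k)"
proof -
  interpret cayley_graph G X
    using assms(1,3,4) by (simp add: cayley_graph_def cayley_graph_axioms_def)
  obtain V' K where "cyclically_minimal G X V'" "length V' = length V"
    "word_pow V k = concat (replicate K V')"
  proof (cases "0 \<le> k")
    case True
    then show ?thesis
      using that[OF assms(7)] by (simp add: word_pow_def)
  next
    case False
    then show ?thesis
      using that[OF cyclically_minimal_word_inv[OF assms(7)]] by (simp add: word_pow_def)
  qed
  then have "local_geodesic_word (180 * \<delta>) (word_pow V k)"
    using cyclically_minimal_power_local_geodesic local_geodesic_word_mono assms(8) by metis
  then show ?thesis
    using local_geodesic_quasi_geodesic assms(5,6) by blast
qed

end
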